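(* Let $L$ be an $R_0$-algebra and $k\in[0,1)$. If $\mu$ is an $(\in,\in\vee q_k)$-fuzzy fated filter of $L$ with $\mu(1)<\tfrac{1-k}{2}$, then $\mu$ is an $(\in,\in)$-fuzzy fated filter of $L$.
   Context: An $R_0$-algebra is a bounded distributive lattice $(L,\wedge,\vee,0,1)$ with an order-reversing involution $\neg$ and a binary operation $\to$ such that for all $x,y,z\in L$: $x\to y=\neg y\to\neg x$; $1\to x=x$; $(y\to z)\wedge((x\to y)\to(x\to z))=y\to z$; $x\to(y\to z)=y\to(x\to z)$; $x\to(y\vee z)=(x\to y)\vee(x\to z)$; $(x\to y)\vee((x\to y)\to(\neg x\vee y))=1$. For $x\in L$, $t\in(0,1]$ and a fuzzy subset $\mu:L\to[0,1]$: $x_t\in\mu$ iff $\mu(x)\ge t$; $x_t\,q_k\,\mu$ iff $\mu(x)+t+k>1$; $x_t\in\vee q_k\,\mu$ iff $x_t\in\mu$ or $x_t\,q_k\,\mu$. $\mu$ is an $(\in,\in\vee q_k)$-fuzzy fated filter of $L$ if (1) for all $x\in L$, $t\in(0,1]$: $x_t\in\mu\Rightarrow 1_t\in\vee q_k\,\mu$; and (2) for all $x,a,y\in L$, $t,s\in(0,1]$: if $(a\to((x\to y)\to x))_t\in\mu$ and $a_s\in\mu$ then $x_{\min\{t,s\}}\in\vee q_k\,\mu$. An $(\in,\in)$-fuzzy fated filter is defined in the same way with "$\in\vee q_k$" replaced by "$\in$" in the conclusions of (1) and (2). *)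

theory Defs
  imports Main "HOL.Real"
begin

definition R0_algebra ::
  "('a::{bounded_lattice, distrib_lattice} \<Rightarrow> 'a) \<Rightarrow> ('a \<Rightarrow> 'a \<Rightarrow> 'a) \<Rightarrow> bool" where
  "R0_algebra neg imp \<longleftrightarrow>
     (\<forall>x. neg (neg x) = x) \<and>
     (\<forall>x y. x \<le> y \<longrightarrow> neg y \<le> neg x) \<and>
     (\<forall>x y. imp x y = imp (neg y) (neg x)) \<and>
     (\<forall>x. imp top x = x) \<and>
     (\<forall>x y z. inf (imp y z) (imp (imp x y) (imp x z)) = imp y z) \<and>
     (\<forall>x y z. imp x (imp y z) = imp y (imp x z)) \<and>
     (\<forall>x y z. imp x (sup y z) = sup (imp x y) (imp x z)) \<and>
     (\<forall>x y. sup (imp x y) (imp (imp x y) (sup (neg x) y)) = top)"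

text \<open>Fuzzy point relations; t is meant to lie in (0,1].\<close>

definition fp_in :: "('a \<Rightarrow> real) \<Rightarrow> 'a \<Rightarrow> real \<Rightarrow> bool" where
  "fp_in \<mu> x t \<longleftrightarrow> \<mu> x \<ge> t"

definition fp_q :: "real \<Rightarrow> ('a \<Rightarrow> real) \<Rightarrow> 'a \<Rightarrow> real \<Rightarrow> bool" where
  "fp_q k \<mu> x t \<longleftrightarrow> \<mu> x + t + k > 1"

definition fp_in_or_q :: "real \<Rightarrow> ('a \<Rightarrow> real) \<Rightarrow> 'a \<Rightarrow> real \<Rightarrow> bool" where
  "fp_in_or_q k \<mu> x t \<longleftrightarrow> fp_in \<mu> x t \<or> fp_q k \<mu> x t"

definition fuzzy_subset :: "('a \<Rightarrow> real) \<Rightarrow> bool" where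
  "fuzzy_subset \<mu> \<longleftrightarrow> (\<forall>x. 0 \<le> \<mu> x \<and> \<mu> x \<le> 1)"

definition in_inq_fuzzy_fated_filter ::
  "('a::{bounded_lattice, distrib_lattice} \<Rightarrow> 'a \<Rightarrow> 'a) \<Rightarrow> real \<Rightarrow> ('a \<Rightarrow> real) \<Rightarrow> bool" where
  "in_inq_fuzzy_fated_filter imp k \<mu> \<longleftrightarrow>
     fuzzy_subset \<mu> \<and>
     (\<forall>x t. 0 < t \<and> t \<le> 1 \<longrightarrow> fp_in \<mu> x t \<longrightarrow> fp_in_or_q k \<mu> top t) \<and>
     (\<forall>x a y t s. 0 < t \<and> t \<le> 1 \<and> 0 < s \<and> s \<le> 1 \<longrightarrow>
        fp_in \<mu> (imp a (imp (imp x y) x)) t \<longrightarrow> fp_in \<mu> a s \<longrightarrow>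
        fp_in_or_q k \<mu> x (min t s))"

definition in_in_fuzzy_fated_filter ::
  "('a::{bounded_lattice, distrib_lattice} \<Rightarrow> 'a \<Rightarrow> 'a) \<Rightarrow> ('a \<Rightarrow> real) \<Rightarrow> bool" where
  "in_in_fuzzy_fated_filter imp \<mu> \<longleftrightarrow>
     fuzzy_subset \<mu> \<and>
     (\<forall>x t. 0 < t \<and> t \<le> 1 \<longrightarrow> fp_in \<mu> x t \<longrightarrow> fp_in \<mu> top t) \<and>
     (\<forall>x a y t s. 0 < t \<and> t \<le> 1 \<and> 0 < s \<and> s \<le> 1 \<longrightarrow>
        fp_in \<mu> (imp a (imp (imp x y) x)) t \<longrightarrow> fp_in \<mu> a s \<longrightarrow>
        fp_in \<mu> x (min t s))"

end

theory Submission
  imports Defs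
begin

text \<open>Below the threshold \<open>(1 - k) / 2\<close> a quasi-coincidence \<open>x\<^sub>t q\<^sub>k \<mu>\<close> already forces
  \<open>\<mu> x > 1 - t - k \<ge> t\<close>, so \<open>\<in>\<or>q\<^sub>k\<close> collapses to \<open>\<in>\<close>.  Hence an \<open>(\<in>,\<in>\<or>q\<^sub>k)\<close>-fuzzy fated
  filter satisfies the \<open>(\<in>,\<in>)\<close> conditions for all levels capped at \<open>(1 - k) / 2\<close>.  If
  \<open>\<mu> 1 < (1 - k) / 2\<close>, then \<open>\<mu> 1\<close> dominates every value of \<open>\<mu>\<close>, so all values stay below
  the threshold and the cap is never active.\<close>

lemma fp_in_or_q_below_threshold:
  assumes "t \<le> (1 - k) / 2" and "fp_in_or_q k \<mu> x t"
  shows "fp_in \<mu> x t"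
  using assms unfolding fp_in_or_q_def fp_in_def fp_q_def by (auto simp: field_simps)

lemma in_inq_fuzzy_fated_filter_top:
  assumes filter: "in_inq_fuzzy_fated_filter imp k \<mu>" and "k < 1"
  shows "min (\<mu> x) ((1 - k) / 2) \<le> \<mu> top"
proof (cases "\<mu> x \<le> 0")
  case True
  with filter show ?thesis
    unfolding in_inq_fuzzy_fated_filter_def fuzzy_subset_def by (smt (verit))
next
  case False
  define t where "t = min (\<mu> x) ((1 - k) / 2)"
  have "0 < t" "t \<le> 1" "fp_in \<mu> x t"
    using False filter \<open>k < 1\<close>
    unfolding t_def fp_in_def in_inq_fuzzy_fated_filter_def fuzzy_subset_def
    by (auto simp: min_le_iff_disj)
  with filter have "fp_in_or_q k \<mu> top t"
    unfolding in_inq_fuzzy_fated_filter_def by blast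
  then have "fp_in \<mu> top t"
    by (rule fp_in_or_q_below_threshold[rotated]) (simp only: t_def min.cobounded2)
  then show ?thesis unfolding t_def fp_in_def .
qed

lemma in_inq_fuzzy_fated_filter_fated:
  assumes filter: "in_inq_fuzzy_fated_filter imp k \<mu>" and "k < 1"
    and "0 < t" "t \<le> 1" "0 < s" "s \<le> 1"
    and "t \<le> \<mu> (imp a (imp (imp x y) x))" and "s \<le> \<mu> a"
  shows "min (min t s) ((1 - k) / 2) \<le> \<mu> x"
proof -
  define c where "c = (1 - k) / 2"
  have "0 < min t c" "min t c \<le> 1" "0 < min s c" "min s c \<le> 1"
    using assms(2-6) unfolding c_def by auto
  moreover have "fp_in \<mu> (imp a (imp (imp x y) x)) (min t c)" "fp_in \<mu> a (min s c)"
    using assms(7,8) unfolding fp_in_def by auto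
  ultimately have "fp_in_or_q k \<mu> x (min (min t c) (min s c))"
    using filter unfolding in_inq_fuzzy_fated_filter_def by blast
  then have "fp_in \<mu> x (min (min t c) (min s c))"
    by (rule fp_in_or_q_below_threshold[rotated]) (simp only: c_def min.cobounded2 min.coboundedI2)
  then show ?thesis unfolding fp_in_def c_def by linarith
qed

theorem corollary3p9:
  fixes neg :: "'a::{bounded_lattice, distrib_lattice} \<Rightarrow> 'a"
    and imp :: "'a \<Rightarrow> 'a \<Rightarrow> 'a"
    and \<mu> :: "'a \<Rightarrow> real"
    and k :: real
  assumes "R0_algebra neg imp"
    and "0 \<le> k" and "k < 1"
    and "in_inq_fuzzy_fated_filter imp k \<mu>"
    and "\<mu> top < (1 - k) / 2"
  shows "in_in_fuzzy_fated_filter imp \<mu>"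
proof -
  have top_max: "\<mu> x \<le> \<mu> top" for x
    using in_inq_fuzzy_fated_filter_top[OF assms(4,3), of x] assms(5) by linarith
  have "min t s \<le> \<mu> x"
    if "0 < t" "t \<le> 1" "0 < s" "s \<le> 1"
      and "t \<le> \<mu> (imp a (imp (imp x y) x))" and "s \<le> \<mu> a" for x a y t s
    using in_inq_fuzzy_fated_filter_fated[OF assms(4,3) that] top_max[of x] assms(5)
    by linarith
  with top_max assms(4) show ?thesis
    unfolding in_in_fuzzy_fated_filter_def in_inq_fuzzy_fated_filter_def fp_in_def
    by (meson order_trans)
qed

end
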